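(* Consider the two-dimensional Euler–Poincaré equation $\partial_t\mathbf m=-\mathbf u\cdot\nabla\mathbf m-(\nabla\mathbf u)^T\cdot\mathbf m-\mathbf m\,\mathrm{div}\,\mathbf u$ with $\mathbf m=\mathbf u-\Delta\mathbf u$, restricted to fields depending only on $(x,t)$, so that $\mathbf u(x,t)=\int_{\mathbb R}G(x,y)\mathbf m(y,t)\,dy$ with $G(x,y)=\frac12e^{-|x-y|}$. For the ansatz $$\mathbf m(x,t)=\sum_{i=1}^N\big(p_i(t)\hat{\mathbf x}+v_i(t)\hat{\mathbf y}\big)\delta(x-q_i(t)),$$ both the $x$- and $y$-components of the equation yield the same equation $\dot q_i=\sum_jp_jG(q_i,q_j)$; moreover $\dot v_i=0$, and $(q_i,p_i)$ satisfy Hamilton's canonical equations $\dot q_i=\partial H/\partial p_i$, $\dot p_i=-\partial H/\partial q_i$ with $$H=\frac12\sum_{i,j=1}^N(p_ip_j+v_iv_j)G(q_i,q_j),$$ the $v_i$ being constant parameters. The variables $y_i$ canonically conjugate to $v_i$ ($\{y_i,v_j\}=\delta_{ij}$) satisfy $\dot y_i=\sum_jv_jG(q_i,q_j)=\hat{\mathbf y}\cdot\mathbf u(q_i,t)$.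
   Context: $\hat{\mathbf x},\hat{\mathbf y}$ are the Cartesian unit vectors; solutions are understood in the weak (distributional) sense, with the derivative of $G$ at its kink interpreted as the average of the one-sided limits, consistently with $\partial H/\partial q_i$. The $q_i$ are assumed distinct. *)

theory Defs
  imports "HOL-Analysis.Analysis"
begin

text \<open>Green function of 1 - d^2/dx^2 on the real line.\<close>
definition G :: "real \<Rightarrow> real \<Rightarrow> real" where
  "G x y = exp (- \<bar>x - y\<bar>) / 2"

text \<open>x-derivative of G(x,y); at the kink x = y it is the average of the
  one-sided limits (namely 0), which is what sgn 0 = 0 produces.\<close>
definition Gx :: "real \<Rightarrow> real \<Rightarrow> real" where
  "Gx x y = - sgn (x - y) * G x y"

text \<open>For m = sum_j a_j(t) delta(x - q_j(t)) (one component of the momentum),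
  the corresponding velocity component  u(x,t) = int G(x,y) m(y,t) dy  and its
  x-derivative (averaged at the kinks).\<close>
definition vel :: "nat \<Rightarrow> (nat \<Rightarrow> real \<Rightarrow> real) \<Rightarrow> (nat \<Rightarrow> real \<Rightarrow> real) \<Rightarrow> real \<Rightarrow> real \<Rightarrow> real" where
  "vel N q a x t = (\<Sum>j<N. a j t * G x (q j t))"

definition dvel :: "nat \<Rightarrow> (nat \<Rightarrow> real \<Rightarrow> real) \<Rightarrow> (nat \<Rightarrow> real \<Rightarrow> real) \<Rightarrow> real \<Rightarrow> real \<Rightarrow> real" where
  "dvel N q a x t = (\<Sum>j<N. a j t * Gx x (q j t))"

text \<open>Test functions on R x T (first coordinate x, second t): C^1 with compact
  support contained in R x T; phix, phit are its partial derivatives.\<close>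
definition test_fn :: "real set \<Rightarrow> (real \<times> real \<Rightarrow> real) \<Rightarrow> (real \<times> real \<Rightarrow> real)
    \<Rightarrow> (real \<times> real \<Rightarrow> real) \<Rightarrow> bool" where
  "test_fn T \<phi> \<phi>x \<phi>t \<longleftrightarrow>
     continuous_on UNIV \<phi>x \<and> continuous_on UNIV \<phi>t \<and>
     (\<forall>z. (\<phi> has_derivative (\<lambda>h. \<phi>x z * fst h + \<phi>t z * snd h)) (at z)) \<and>
     compact (closure {z. \<phi> z \<noteq> 0}) \<and> closure {z. \<phi> z \<noteq> 0} \<subseteq> UNIV \<times> T"

text \<open>Weak form of the x-component of the 2D EP equation for fields depending on
  (x,t) only:  d_t m1 + d_x(u1 m1) + (d_x u1) m1 + (d_x u2) m2 = 0,
  with m1 = sum p_i delta(x-q_i), m2 = sum v_i delta(x-q_i), u = G * m.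
  Pairing with a test function phi (delta pairing = point evaluation).\<close>
definition weak_EP_x :: "nat \<Rightarrow> (nat \<Rightarrow> real \<Rightarrow> real) \<Rightarrow> (nat \<Rightarrow> real \<Rightarrow> real)
    \<Rightarrow> (nat \<Rightarrow> real \<Rightarrow> real) \<Rightarrow> real set \<Rightarrow> bool" where
  "weak_EP_x N q p v T \<longleftrightarrow>
     (\<forall>\<phi> \<phi>x \<phi>t. test_fn T \<phi> \<phi>x \<phi>t \<longrightarrow>
        ((\<lambda>t. \<Sum>i<N. p i t * (\<phi>t (q i t, t) + vel N q p (q i t) t * \<phi>x (q i t, t))
                   - (dvel N q p (q i t) t * p i t + dvel N q v (q i t) t * v i t) * \<phi> (q i t, t))
          has_integral 0) T)"

text \<open>Weak form of the y-component:  d_t m2 + d_x(u1 m2) = 0.\<close>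
definition weak_EP_y :: "nat \<Rightarrow> (nat \<Rightarrow> real \<Rightarrow> real) \<Rightarrow> (nat \<Rightarrow> real \<Rightarrow> real)
    \<Rightarrow> (nat \<Rightarrow> real \<Rightarrow> real) \<Rightarrow> real set \<Rightarrow> bool" where
  "weak_EP_y N q p v T \<longleftrightarrow>
     (\<forall>\<phi> \<phi>x \<phi>t. test_fn T \<phi> \<phi>x \<phi>t \<longrightarrow>
        ((\<lambda>t. \<Sum>i<N. v i t * (\<phi>t (q i t, t) + vel N q p (q i t) t * \<phi>x (q i t, t)))
          has_integral 0) T)"

definition Ham :: "nat \<Rightarrow> (nat \<Rightarrow> real) \<Rightarrow> (nat \<Rightarrow> real) \<Rightarrow> (nat \<Rightarrow> real) \<Rightarrow> real" where
  "Ham N Q P V = (1/2) * (\<Sum>i<N. \<Sum>j<N. (P i * P j + V i * V j) * G (Q i) (Q j))"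

end

theory Submission
  imports Defs
begin

(* The transport terms of both weak equations combine with the test function into total time
   derivatives d/dt [p_i(t) phi(q_i(t), t)] (resp. with v_i), which integrate to zero.  What remains
   is a space-time distribution sum_i (a_i delta(x - q_i) - b_i delta'(x - q_i)) with continuous
   coefficients, and it vanishes only if every a_i and b_i vanishes: a bump in x around one particle
   (or x - q_i times it) multiplied by an ever narrower bump in t isolates each coefficient.  Here
   a_i = -dp_i/dt - dH/dq_i (resp. -dv_i/dt) and b_i = p_i (resp. v_i) times u(q_i) - dq_i/dt. *)

definition bump :: "real \<Rightarrow> real \<Rightarrow> real \<Rightarrow> real" where
  "bump r c x = (max 0 (r\<^sup>2 - (x - c)\<^sup>2))\<^sup>2"

definition bump' :: "real \<Rightarrow> real \<Rightarrow> real \<Rightarrow> real" where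
  "bump' r c x = - 4 * max 0 (r\<^sup>2 - (x - c)\<^sup>2) * (x - c)"

lemma DERIV_max0_power2: "((\<lambda>y::real. (max 0 y)\<^sup>2) has_real_derivative 2 * max 0 y) (at y)"
proof (cases y "0::real" rule: linorder_cases)
  case less
  have "((\<lambda>y::real. 0) has_real_derivative 2 * max 0 y) (at y)"
    using less by simp
  then show ?thesis
    by (rule has_field_derivative_transform_within_open[where S="{..<0}"]) (use less in auto)
next
  case greater
  have "((\<lambda>y::real. y\<^sup>2) has_real_derivative 2 * max 0 y) (at y)"
    using greater by (auto intro!: derivative_eq_intros)
  then show ?thesis
    by (rule has_field_derivative_transform_within_open[where S="{0<..}"]) (use greater in auto)
next
  case equal
  have quotient: "(max 0 z)\<^sup>2 / z = max 0 z" if "z \<noteq> 0" for z :: real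
    using that by (cases "z > 0") (auto simp: power2_eq_square max_def)
  have "((\<lambda>z::real. max 0 z) \<longlongrightarrow> 0) (at 0)"
    using tendsto_max[OF tendsto_const tendsto_ident_at, of 0 0 UNIV] by simp
  then have "((\<lambda>z::real. (max 0 z)\<^sup>2 / z) \<longlongrightarrow> 0) (at 0)"
    by (rule Lim_transform_eventually) (simp add: eventually_at_filter quotient)
  then show ?thesis
    using equal by (simp add: has_field_derivative_iff)
qed

lemma bump_has_derivative: "(bump r c has_real_derivative bump' r c x) (at x)"
proof -
  have "((\<lambda>x. (max 0 (r\<^sup>2 - (x - c)\<^sup>2))\<^sup>2) has_real_derivative
      2 * max 0 (r\<^sup>2 - (x - c)\<^sup>2) * - (2 * (x - c) * 1)) (at x)"
    by (rule DERIV_chain2[OF DERIV_max0_power2]) (auto intro!: derivative_eq_intros)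
  then show ?thesis
    unfolding bump_def[abs_def] bump'_def by (simp add: algebra_simps)
qed

lemma continuous_on_bump': "continuous_on UNIV (bump' r c)"
  unfolding bump'_def by (intro continuous_intros)

lemma bump_nonneg: "bump r c x \<ge> 0"
  unfolding bump_def by simp

lemma bump_center: "bump r c c = r ^ 4" "bump' r c c = 0"
  unfolding bump_def bump'_def by auto

lemma bump_outside:
  assumes "r \<ge> 0" "\<bar>x - c\<bar> \<ge> r"
  shows "bump r c x = 0" "bump' r c x = 0"
proof -
  have "r\<^sup>2 \<le> (x - c)\<^sup>2"
    using assms by (metis abs_le_square_iff abs_of_nonneg)
  then show "bump r c x = 0" "bump' r c x = 0"
    unfolding bump_def bump'_def by auto
qed

lemma bump_integrals_vanish_imp_zero:
  fixes h :: "real \<Rightarrow> real"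
  assumes T: "open T" "t0 \<in> T" and h: "continuous_on T h"
    and vanish: "\<And>\<rho>. \<rho> > 0 \<Longrightarrow> cball t0 \<rho> \<subseteq> T \<Longrightarrow> ((\<lambda>t. h t * bump \<rho> t0 t) has_integral 0) T"
  shows "h t0 = 0"
proof (rule ccontr)
  assume "h t0 \<noteq> 0"
  then have pos: "h t0 * h t0 > 0"
    by (simp add: zero_less_mult_iff linorder_neq_iff disj_commute)
  have "continuous_on T (\<lambda>t. h t0 * h t)"
    using h by (intro continuous_intros)
  then obtain d where d: "d > 0" "\<And>t. t \<in> T \<Longrightarrow> dist t t0 < d \<Longrightarrow> dist (h t0 * h t) (h t0 * h t0) < h t0 * h t0"
    using T pos unfolding continuous_on_iff by metis
  obtain e where e: "e > 0" "ball t0 e \<subseteq> T"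
    using T open_contains_ball by blast
  define \<rho> where "\<rho> = min d e / 2"
  have \<rho>: "\<rho> > 0" "cball t0 \<rho> \<subseteq> T"
    using d e by (auto simp: \<rho>_def)
  have sign: "h t0 * h t > 0" if "t \<in> cball t0 \<rho>" for t
  proof -
    have "t \<in> T" "dist t t0 < d"
      using that \<rho>(2) d(1) e(1) by (auto simp: \<rho>_def dist_commute)
    then show ?thesis
      using d(2) by (force simp: dist_real_def abs_less_iff)
  qed
  define f where "f t = h t0 * h t * bump \<rho> t0 t" for t
  have "f = (\<lambda>t. h t0 * (h t * bump \<rho> t0 t))"
    by (simp add: f_def[abs_def] mult.assoc)
  then have f_int: "((\<lambda>t. if t \<in> T then f t else 0) has_integral 0) UNIV"
    using has_integral_mult_right[OF vanish[OF \<rho>], of "h t0"] by (simp add: has_integral_restrict_UNIV)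
  have box: "cbox (t0 - \<rho>) (t0 + \<rho>) = cball t0 \<rho>"
    by (simp add: cbox_interval cball_eq_atLeastAtMost)
  have restrict: "(if t \<in> T then f t else 0) = (if t \<in> cbox (t0 - \<rho>) (t0 + \<rho>) then f t else 0)" for t
  proof (cases "t \<in> cbox (t0 - \<rho>) (t0 + \<rho>)")
    case True
    then have "t \<in> T"
      using box \<rho>(2) by blast
    with True show ?thesis
      by simp
  next
    case False
    then have "\<rho> \<le> \<bar>t - t0\<bar>"
      by (auto simp: cbox_interval)
    with False show ?thesis
      using bump_outside(1) \<rho>(1) by (simp add: f_def)
  qed
  have "(f has_integral 0) (cbox (t0 - \<rho>) (t0 + \<rho>))"
    using f_int unfolding restrict has_integral_restrict_UNIV .
  then have "f t0 = 0"
  proof (rule has_integral_0_cbox_imp_0[rotated 2])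
    show "continuous_on (cbox (t0 - \<rho>) (t0 + \<rho>)) f"
      unfolding box f_def bump_def using continuous_on_subset[OF h \<rho>(2)]
      by (intro continuous_intros)
    show "0 \<le> f t" if "t \<in> box (t0 - \<rho>) (t0 + \<rho>)" for t
    proof -
      have "t \<in> cball t0 \<rho>"
        using that by (simp add: dist_real_def abs_le_iff)
      then show ?thesis
        unfolding f_def by (rule mult_nonneg_nonneg[OF less_imp_le[OF sign] bump_nonneg])
    qed
  qed (use \<rho> in auto)
  then show False
    using pos \<rho> by (simp add: f_def bump_center)
qed

lemma test_fn_product:
  fixes \<beta> \<beta>' \<psi> \<psi>' :: "real \<Rightarrow> real"
  assumes \<beta>: "\<And>x. (\<beta> has_real_derivative \<beta>' x) (at x)" "continuous_on UNIV \<beta>'"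
    and \<psi>: "\<And>t. (\<psi> has_real_derivative \<psi>' t) (at t)" "continuous_on UNIV \<psi>'"
    and \<beta>_supp: "\<And>x. \<bar>x - c\<bar> \<ge> r \<Longrightarrow> \<beta> x = 0"
    and \<psi>_supp: "\<And>t. \<bar>t - t0\<bar> \<ge> \<rho> \<Longrightarrow> \<psi> t = 0"
    and T: "cball t0 \<rho> \<subseteq> T"
  shows "test_fn T (\<lambda>z. \<beta> (fst z) * \<psi> (snd z)) (\<lambda>z. \<beta>' (fst z) * \<psi> (snd z))
           (\<lambda>z. \<beta> (fst z) * \<psi>' (snd z))"
  unfolding test_fn_def
proof (intro conjI allI)
  have "continuous_on UNIV \<beta>" "continuous_on UNIV \<psi>"
    using \<beta>(1) \<psi>(1) by (meson DERIV_isCont continuous_at_imp_continuous_on)+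
  then show "continuous_on UNIV (\<lambda>z::real \<times> real. \<beta>' (fst z) * \<psi> (snd z))"
    "continuous_on UNIV (\<lambda>z::real \<times> real. \<beta> (fst z) * \<psi>' (snd z))"
    using \<beta>(2) \<psi>(2)
    by (auto intro!: continuous_intros continuous_on_compose2[of UNIV \<beta>'] continuous_on_compose2[of UNIV \<psi>]
        continuous_on_compose2[of UNIV \<beta>] continuous_on_compose2[of UNIV \<psi>'])
  fix z :: "real \<times> real"
  have "((\<lambda>z. \<beta> (fst z)) has_derivative (\<lambda>h. \<beta>' (fst z) * fst h)) (at z)"
    using has_derivative_compose[OF has_derivative_fst[OF has_derivative_ident]
        \<beta>(1)[of "fst z", unfolded has_field_derivative_def]] by simp
  moreover have "((\<lambda>z. \<psi> (snd z)) has_derivative (\<lambda>h. \<psi>' (snd z) * snd h)) (at z)"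
    using has_derivative_compose[OF has_derivative_snd[OF has_derivative_ident]
        \<psi>(1)[of "snd z", unfolded has_field_derivative_def]] by simp
  ultimately show "((\<lambda>z. \<beta> (fst z) * \<psi> (snd z)) has_derivative
      (\<lambda>h. \<beta>' (fst z) * \<psi> (snd z) * fst h + \<beta> (fst z) * \<psi>' (snd z) * snd h)) (at z)"
    by (rule has_derivative_eq_rhs[OF has_derivative_mult]) (auto simp: algebra_simps)
next
  have supp: "{z. \<beta> (fst z) * \<psi> (snd z) \<noteq> 0} \<subseteq> cball c r \<times> cball t0 \<rho>"
    using \<beta>_supp \<psi>_supp by (force simp: dist_real_def abs_minus_commute)
  show "compact (closure {z. \<beta> (fst z) * \<psi> (snd z) \<noteq> 0})"
    unfolding compact_closure by (rule bounded_subset[OF _ supp]) (simp add: bounded_Times)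
  have "closure {z. \<beta> (fst z) * \<psi> (snd z) \<noteq> 0} \<subseteq> cball c r \<times> cball t0 \<rho>"
    using supp by (simp add: closure_minimal closed_Times)
  then show "closure {z. \<beta> (fst z) * \<psi> (snd z) \<noteq> 0} \<subseteq> UNIV \<times> T"
    using T by blast
qed

text \<open>\<open>delta_sum_weakly_zero T N q a b\<close> says that the distribution
  \<open>\<Sum>\<^sub>j (a\<^sub>j(t) \<delta>(x - q\<^sub>j(t)) - b\<^sub>j(t) \<delta>'(x - q\<^sub>j(t)))\<close> vanishes on \<open>\<real> \<times> T\<close>.\<close>
definition delta_sum_weakly_zero ::
    "real set \<Rightarrow> nat \<Rightarrow> (nat \<Rightarrow> real \<Rightarrow> real) \<Rightarrow> (nat \<Rightarrow> real \<Rightarrow> real) \<Rightarrow> (nat \<Rightarrow> real \<Rightarrow> real) \<Rightarrow> bool"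
  where "delta_sum_weakly_zero T N q a b \<longleftrightarrow>
    (\<forall>\<phi> \<phi>x \<phi>t. test_fn T \<phi> \<phi>x \<phi>t \<longrightarrow>
       ((\<lambda>t. \<Sum>j<N. a j t * \<phi> (q j t, t) + b j t * \<phi>x (q j t, t)) has_integral 0) T)"

lemma delta_sum_weakly_zero_profile:
  fixes a b q :: "nat \<Rightarrow> real \<Rightarrow> real" and \<beta> \<beta>' :: "real \<Rightarrow> real"
  assumes T: "open T" "t0 \<in> T" and i: "i < N"
    and cont: "\<forall>j<N. continuous_on T (q j) \<and> continuous_on T (a j) \<and> continuous_on T (b j)"
    and W: "delta_sum_weakly_zero T N q a b"
    and \<beta>: "\<And>x. (\<beta> has_real_derivative \<beta>' x) (at x)" "continuous_on UNIV \<beta>'"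
    and \<beta>_supp: "\<And>x. \<bar>x - q i t0\<bar> \<ge> r \<Longrightarrow> \<beta> x = 0 \<and> \<beta>' x = 0"
    and far: "\<forall>j<N. j \<noteq> i \<longrightarrow> \<bar>q j t0 - q i t0\<bar> \<ge> r"
  shows "a i t0 * \<beta> (q i t0) + b i t0 * \<beta>' (q i t0) = 0"
proof -
  define h where "h t = (\<Sum>j<N. a j t * \<beta> (q j t) + b j t * \<beta>' (q j t))" for t
  have "continuous_on UNIV \<beta>"
    using \<beta>(1) by (meson DERIV_isCont continuous_at_imp_continuous_on)
  then have "continuous_on T h"
    unfolding h_def using cont \<beta>(2)
    by (auto intro!: continuous_intros continuous_on_compose2[of UNIV \<beta>] continuous_on_compose2[of UNIV \<beta>'])
  then have "h t0 = 0"
  proof (rule bump_integrals_vanish_imp_zero[OF T])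
    fix \<rho> :: real assume \<rho>: "\<rho> > 0" "cball t0 \<rho> \<subseteq> T"
    have "test_fn T (\<lambda>z. \<beta> (fst z) * bump \<rho> t0 (snd z)) (\<lambda>z. \<beta>' (fst z) * bump \<rho> t0 (snd z))
           (\<lambda>z. \<beta> (fst z) * bump' \<rho> t0 (snd z))"
      using \<beta> \<beta>_supp \<rho> bump_outside
      by (intro test_fn_product[where c="q i t0" and r=r] bump_has_derivative continuous_on_bump') auto
    then have "((\<lambda>t. \<Sum>j<N. a j t * (\<beta> (q j t) * bump \<rho> t0 t) + b j t * (\<beta>' (q j t) * bump \<rho> t0 t))
        has_integral 0) T"
      using W unfolding delta_sum_weakly_zero_def by fastforce
    then show "((\<lambda>t. h t * bump \<rho> t0 t) has_integral 0) T"
      unfolding h_def sum_distrib_right by (simp add: algebra_simps)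
  qed
  moreover have "h t0 = a i t0 * \<beta> (q i t0) + b i t0 * \<beta>' (q i t0)"
    unfolding h_def using i far \<beta>_supp
    by (subst sum.remove[of _ i]) (auto intro!: sum.neutral)
  ultimately show ?thesis
    by simp
qed

lemma delta_sum_weakly_zero_iff:
  fixes a b q :: "nat \<Rightarrow> real \<Rightarrow> real"
  assumes T: "open T"
    and cont: "\<forall>j<N. continuous_on T (q j) \<and> continuous_on T (a j) \<and> continuous_on T (b j)"
    and distinct: "\<forall>t\<in>T. \<forall>i<N. \<forall>j<N. i \<noteq> j \<longrightarrow> q i t \<noteq> q j t"
  shows "delta_sum_weakly_zero T N q a b \<longleftrightarrow> (\<forall>i<N. \<forall>t\<in>T. a i t = 0 \<and> b i t = 0)"
proof
  assume W: "delta_sum_weakly_zero T N q a b"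
  show "\<forall>i<N. \<forall>t\<in>T. a i t = 0 \<and> b i t = 0"
  proof (intro allI impI ballI)
    fix i t0 assume i: "i < N" and t0: "t0 \<in> T"
    obtain r where r: "r > 0" "\<forall>x\<in>(\<lambda>j. q j t0) ` ({..<N} - {i}). x \<noteq> q i t0 \<longrightarrow> r \<le> dist (q i t0) x"
      using finite_set_avoid[of "(\<lambda>j. q j t0) ` ({..<N} - {i})" "q i t0"] by auto
    have far: "\<forall>j<N. j \<noteq> i \<longrightarrow> \<bar>q j t0 - q i t0\<bar> \<ge> r"
      using r distinct t0 i by (auto simp: dist_real_def abs_minus_commute)
    \<comment> \<open>\<open>bump'\<close> vanishes at the centre, so the profile \<open>bump\<close> isolates \<open>a i t0\<close> and
      the profile \<open>(x - q i t0) * bump\<close> isolates \<open>b i t0\<close>.\<close>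
    let ?\<beta> = "bump r (q i t0)"
    have "a i t0 * ?\<beta> (q i t0) + b i t0 * bump' r (q i t0) (q i t0) = 0"
      using r(1) bump_outside
      by (intro delta_sum_weakly_zero_profile[OF T t0 i cont W _ _ _ far]
          bump_has_derivative continuous_on_bump') auto
    moreover have "a i t0 * ((q i t0 - q i t0) * ?\<beta> (q i t0)) +
        b i t0 * (?\<beta> (q i t0) + (q i t0 - q i t0) * bump' r (q i t0) (q i t0)) = 0"
    proof (rule delta_sum_weakly_zero_profile[OF T t0 i cont W _ _ _ far,
          where \<beta>="\<lambda>x. (x - q i t0) * ?\<beta> x" and \<beta>'="\<lambda>x. ?\<beta> x + (x - q i t0) * bump' r (q i t0) x"])
      show "((\<lambda>x. (x - q i t0) * ?\<beta> x) has_real_derivative ?\<beta> x + (x - q i t0) * bump' r (q i t0) x) (at x)" for x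
        by (auto intro!: derivative_eq_intros bump_has_derivative)
      show "continuous_on UNIV (\<lambda>x. ?\<beta> x + (x - q i t0) * bump' r (q i t0) x)"
        unfolding bump_def bump'_def by (intro continuous_intros)
      show "(x - q i t0) * ?\<beta> x = 0 \<and> ?\<beta> x + (x - q i t0) * bump' r (q i t0) x = 0"
        if "r \<le> \<bar>x - q i t0\<bar>" for x
        using bump_outside[of r x "q i t0"] r(1) that by simp
    qed
    ultimately show "a i t0 = 0 \<and> b i t0 = 0"
      using r(1) by (simp add: bump_center)
  qed
next
  assume "\<forall>i<N. \<forall>t\<in>T. a i t = 0 \<and> b i t = 0"
  then show "delta_sum_weakly_zero T N q a b"
    unfolding delta_sum_weakly_zero_def by (auto intro!: has_integral_is_0)
qed

lemma has_integral_derivative_compact_support: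
  fixes g g' :: "real \<Rightarrow> real"
  assumes K: "compact K" "K \<subseteq> T"
    and g': "\<And>t. t \<in> T \<Longrightarrow> (g has_real_derivative g' t) (at t)"
    and g_supp: "\<And>t. t \<notin> K \<Longrightarrow> g t = 0"
  shows "(g' has_integral 0) T"
proof -
  have "open (- K)"
    using compact_imp_closed[OF K(1)] by (simp add: open_Compl)
  have outside: "(g has_real_derivative 0) (at t)" if "t \<notin> K" for t
    by (rule has_field_derivative_transform_within_open[OF DERIV_const \<open>open (- K)\<close>])
       (use that g_supp in auto)
  define D where "D t = (if t \<in> T then g' t else 0)" for t
  have D: "(g has_real_derivative D t) (at t)" for t
    using g' outside K(2) by (cases "t \<in> T") (auto simp: D_def)
  have D_supp: "D t = 0" if "t \<notin> K" for t
    using DERIV_unique[OF D outside[OF that]] .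
  obtain a where "K \<subseteq> box (- a) a"
    using bounded_subset_box_symmetric[OF compact_imp_bounded[OF K(1)]] .
  then have a: "K \<subseteq> {- \<bar>a\<bar> <..< \<bar>a\<bar>}"
    by (auto simp: subset_eq)
  have "(D has_integral g \<bar>a\<bar> - g (- \<bar>a\<bar>)) {- \<bar>a\<bar>..\<bar>a\<bar>}"
    using D by (intro fundamental_theorem_of_calculus)
      (auto simp: has_real_derivative_iff_has_vector_derivative intro: has_vector_derivative_at_within)
  moreover have "\<bar>a\<bar> \<notin> K" "- \<bar>a\<bar> \<notin> K"
    using a by auto
  ultimately have "(D has_integral 0) {- \<bar>a\<bar>..\<bar>a\<bar>}"
    using g_supp by simp
  then have "(D has_integral 0) UNIV"
  proof (rule has_integral_on_superset)
    fix t assume "t \<notin> {- \<bar>a\<bar>..\<bar>a\<bar>}"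
    then have "t \<notin> K"
      using a by auto
    then show "D t = 0"
      by (rule D_supp)
  qed simp
  moreover have "D = (\<lambda>t. if t \<in> T then g' t else 0)"
    by (simp add: D_def[abs_def])
  ultimately show ?thesis
    by (simp add: has_integral_restrict_UNIV)
qed

lemma C1_differentiable_on_openD:
  fixes f :: "real \<Rightarrow> real"
  assumes "f C1_differentiable_on T" "open T"
  shows "\<And>t. t \<in> T \<Longrightarrow> (f has_real_derivative deriv f t) (at t)"
    and "continuous_on T (deriv f)" and "continuous_on T f"
proof -
  obtain D where D: "\<And>t. t \<in> T \<Longrightarrow> (f has_real_derivative D t) (at t)" "continuous_on T D"
    using assms unfolding C1_differentiable_on_def has_real_derivative_iff_has_vector_derivative by blast
  then show "\<And>t. t \<in> T \<Longrightarrow> (f has_real_derivative deriv f t) (at t)"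
    by (metis DERIV_imp_deriv)
  show "continuous_on T (deriv f)"
    using D by (metis DERIV_imp_deriv continuous_on_cong)
  show "continuous_on T f"
    using D(1) by (meson DERIV_isCont continuous_at_imp_continuous_on)
qed

lemma test_fn_along_path_has_derivative:
  assumes "test_fn T \<phi> \<phi>x \<phi>t" and "(q has_real_derivative q') (at t)"
  shows "((\<lambda>s. \<phi> (q s, s)) has_real_derivative \<phi>x (q t, t) * q' + \<phi>t (q t, t)) (at t)"
proof -
  have "(\<phi> has_derivative (\<lambda>h. \<phi>x (q t, t) * fst h + \<phi>t (q t, t) * snd h)) (at (q t, t))"
    using assms(1) unfolding test_fn_def by blast
  moreover have "((\<lambda>s. (q s, s)) has_derivative (\<lambda>h. (q' * h, h))) (at t)"
    using has_derivative_Pair[OF assms(2)[unfolded has_field_derivative_def] has_derivative_ident]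
    by simp
  ultimately show ?thesis
    unfolding has_field_derivative_def
    by (rule has_derivative_eq_rhs[OF has_derivative_compose[rotated]]) (auto simp: algebra_simps)
qed

lemma test_fn_transport_integral_zero:
  fixes q r :: "nat \<Rightarrow> real \<Rightarrow> real"
  assumes T: "open T" and C1: "\<forall>j<N. q j C1_differentiable_on T \<and> r j C1_differentiable_on T"
    and \<phi>: "test_fn T \<phi> \<phi>x \<phi>t"
  shows "((\<lambda>t. \<Sum>j<N. deriv (r j) t * \<phi> (q j t, t)
                     + r j t * (\<phi>x (q j t, t) * deriv (q j) t + \<phi>t (q j t, t))) has_integral 0) T"
proof (rule has_integral_derivative_compact_support)
  define K where "K = snd ` closure {z. \<phi> z \<noteq> 0}"
  have supp: "compact (closure {z. \<phi> z \<noteq> 0})" "closure {z. \<phi> z \<noteq> 0} \<subseteq> UNIV \<times> T"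
    using \<phi> unfolding test_fn_def by blast+
  show "compact K"
    unfolding K_def by (rule compact_continuous_image[OF continuous_on_snd[OF continuous_on_id] supp(1)])
  show "K \<subseteq> T"
  proof
    fix t assume "t \<in> K"
    then obtain z where "z \<in> closure {z. \<phi> z \<noteq> 0}" "t = snd z"
      unfolding K_def by blast
    then show "t \<in> T"
      using supp(2) mem_Times_iff by blast
  qed
  show "(\<Sum>j<N. r j t * \<phi> (q j t, t)) = 0" if "t \<notin> K" for t
  proof -
    have "\<phi> (x, t) = 0" for x
    proof (rule ccontr)
      assume "\<phi> (x, t) \<noteq> 0"
      then have "(x, t) \<in> closure {z. \<phi> z \<noteq> 0}"
        by (intro subsetD[OF closure_subset]) simp
      then have "t \<in> K"
        unfolding K_def by (rule rev_image_eqI) simp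
      with that show False
        by contradiction
    qed
    then show ?thesis
      by simp
  qed
  fix t assume t: "t \<in> T"
  show "((\<lambda>t. \<Sum>j<N. r j t * \<phi> (q j t, t)) has_real_derivative
      (\<Sum>j<N. deriv (r j) t * \<phi> (q j t, t) + r j t * (\<phi>x (q j t, t) * deriv (q j) t + \<phi>t (q j t, t)))) (at t)"
  proof (rule DERIV_sum)
    fix j assume "j \<in> {..<N}"
    then have "(r j has_real_derivative deriv (r j) t) (at t)" "(q j has_real_derivative deriv (q j) t) (at t)"
      using C1 C1_differentiable_on_openD(1)[OF _ T t] by auto
    from DERIV_mult'[OF this(1) test_fn_along_path_has_derivative[OF \<phi> this(2)]]
    show "((\<lambda>t. r j t * \<phi> (q j t, t)) has_real_derivative
        deriv (r j) t * \<phi> (q j t, t) + r j t * (\<phi>x (q j t, t) * deriv (q j) t + \<phi>t (q j t, t))) (at t)"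
      by (simp add: add.commute)
  qed
qed

lemma weak_form_iff_coeffs_zero:
  fixes q r a b :: "nat \<Rightarrow> real \<Rightarrow> real"
  assumes T: "open T"
    and C1: "\<forall>j<N. q j C1_differentiable_on T \<and> r j C1_differentiable_on T"
    and cont: "\<forall>j<N. continuous_on T (a j) \<and> continuous_on T (b j)"
    and distinct: "\<forall>t\<in>T. \<forall>i<N. \<forall>j<N. i \<noteq> j \<longrightarrow> q i t \<noteq> q j t"
    and W: "\<And>\<phi> \<phi>x \<phi>t t. t \<in> T \<Longrightarrow> W \<phi> \<phi>x \<phi>t t =
       (\<Sum>j<N. deriv (r j) t * \<phi> (q j t, t) + r j t * (\<phi>x (q j t, t) * deriv (q j) t + \<phi>t (q j t, t)))
       + (\<Sum>j<N. a j t * \<phi> (q j t, t) + b j t * \<phi>x (q j t, t))"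
  shows "(\<forall>\<phi> \<phi>x \<phi>t. test_fn T \<phi> \<phi>x \<phi>t \<longrightarrow> (W \<phi> \<phi>x \<phi>t has_integral 0) T)
     \<longleftrightarrow> (\<forall>i<N. \<forall>t\<in>T. a i t = 0 \<and> b i t = 0)"
proof -
  have "(W \<phi> \<phi>x \<phi>t has_integral 0) T \<longleftrightarrow>
      ((\<lambda>t. \<Sum>j<N. a j t * \<phi> (q j t, t) + b j t * \<phi>x (q j t, t)) has_integral 0) T"
    (is "_ \<longleftrightarrow> (?D has_integral 0) T")
    if \<phi>: "test_fn T \<phi> \<phi>x \<phi>t" for \<phi> \<phi>x \<phi>t
  proof -
    let ?I = "\<lambda>t. \<Sum>j<N. deriv (r j) t * \<phi> (q j t, t) + r j t * (\<phi>x (q j t, t) * deriv (q j) t + \<phi>t (q j t, t))"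
    have I: "(?I has_integral 0) T"
      by (rule test_fn_transport_integral_zero[OF T C1 \<phi>])
    have "(W \<phi> \<phi>x \<phi>t has_integral 0) T \<longleftrightarrow> ((\<lambda>t. ?I t + ?D t) has_integral 0) T"
      using W by (rule has_integral_cong)
    also have "\<dots> \<longleftrightarrow> (?D has_integral 0) T"
    proof
      assume "((\<lambda>t. ?I t + ?D t) has_integral 0) T"
      from has_integral_diff[OF this I] show "(?D has_integral 0) T"
        by simp
    next
      assume "(?D has_integral 0) T"
      from has_integral_add[OF I this] show "((\<lambda>t. ?I t + ?D t) has_integral 0) T"
        by simp
    qed
    finally show ?thesis .
  qed
  then have "(\<forall>\<phi> \<phi>x \<phi>t. test_fn T \<phi> \<phi>x \<phi>t \<longrightarrow> (W \<phi> \<phi>x \<phi>t has_integral 0) T)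
      \<longleftrightarrow> delta_sum_weakly_zero T N q a b"
    unfolding delta_sum_weakly_zero_def by blast
  also have "\<dots> \<longleftrightarrow> (\<forall>i<N. \<forall>t\<in>T. a i t = 0 \<and> b i t = 0)"
    using C1 cont C1_differentiable_on_openD(3)[OF _ T]
    by (intro delta_sum_weakly_zero_iff[OF T _ distinct]) blast
  finally show ?thesis .
qed

lemma G_sym: "G x y = G y x"
  unfolding G_def by (simp add: abs_minus_commute)

lemma G_diag [simp]: "G x x = 1/2" and Gx_diag [simp]: "Gx x x = 0"
  unfolding G_def Gx_def by simp_all

lemma G_has_derivative:
  assumes "x \<noteq> c"
  shows "((\<lambda>s. G s c) has_real_derivative Gx x c) (at x)"
proof (cases "x > c")
  case True
  have "((\<lambda>s. exp (- (s - c)) / 2) has_real_derivative Gx x c) (at x)"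
    using True by (auto intro!: derivative_eq_intros simp: Gx_def G_def)
  then show ?thesis
    by (rule has_field_derivative_transform_within_open[where S="{c<..}"]) (use True in \<open>auto simp: G_def\<close>)
next
  case False
  with assms have "x < c"
    by simp
  have "((\<lambda>s. exp (s - c) / 2) has_real_derivative Gx x c) (at x)"
    using \<open>x < c\<close> by (auto intro!: derivative_eq_intros simp: Gx_def G_def)
  then show ?thesis
    by (rule has_field_derivative_transform_within_open[where S="{..<c}"]) (use \<open>x < c\<close> in \<open>auto simp: G_def\<close>)
qed

lemma sum_sum_delta:
  fixes f :: "nat \<Rightarrow> nat \<Rightarrow> real"
  assumes "i < N"
  shows "(\<Sum>k<N. \<Sum>l<N. f k l * ((if k = i then g l else 0) + (if l = i then g k else 0)))
       = (\<Sum>l<N. f i l * g l) + (\<Sum>k<N. f k i * g k)"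
proof -
  have "(\<Sum>k<N. \<Sum>l<N. f k l * (if k = i then g l else 0)) = (\<Sum>k<N. if k = i then (\<Sum>l<N. f k l * g l) else 0)"
    by (rule sum.cong) auto
  then show ?thesis
    using assms by (simp add: distrib_left sum.distrib if_distrib[where f="\<lambda>x. _ * x"] sum.delta cong: if_cong)
qed

lemma Ham_swap: "Ham N Q P V = Ham N Q V P"
  unfolding Ham_def by (simp add: add.commute)

lemma Ham_has_derivative_momentum:
  assumes i: "i < N"
  shows "((\<lambda>s. Ham N Q (P(i := s)) V) has_real_derivative (\<Sum>j<N. P j * G (Q i) (Q j))) (at (P i))"
proof -
  have "((\<lambda>s. ((P(i := s)) k * (P(i := s)) l + V k * V l) * G (Q k) (Q l)) has_real_derivative
      G (Q k) (Q l) * ((if k = i then P l else 0) + (if l = i then P k else 0))) (at (P i))" for k l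
    by (cases "k = i"; cases "l = i") (auto intro!: derivative_eq_intros)
  then have "((\<lambda>s. Ham N Q (P(i := s)) V) has_real_derivative
      1/2 * (\<Sum>k<N. \<Sum>l<N. G (Q k) (Q l) * ((if k = i then P l else 0) + (if l = i then P k else 0)))) (at (P i))"
    unfolding Ham_def by (intro DERIV_cmult DERIV_sum)
  moreover have "1/2 * (\<Sum>k<N. \<Sum>l<N. G (Q k) (Q l) * ((if k = i then P l else 0) + (if l = i then P k else 0)))
      = (\<Sum>j<N. P j * G (Q i) (Q j))"
    unfolding sum_sum_delta[OF i] by (simp add: G_sym[of _ "Q i"] mult.commute)
  ultimately show ?thesis
    by (rule DERIV_cong)
qed

text \<open>At \<open>k = l = i\<close> the term \<open>G (Q i) (Q i) = 1/2\<close> does not depend on \<open>Q i\<close>; this matches the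
  kink value \<open>Gx x x = 0\<close>, i.e. the averaged one-sided derivatives.\<close>
lemma Ham_has_derivative_position:
  assumes i: "i < N" and distinct: "\<forall>j<N. j \<noteq> i \<longrightarrow> Q j \<noteq> Q i"
  shows "((\<lambda>s. Ham N (Q(i := s)) P V) has_real_derivative
     P i * (\<Sum>j<N. P j * Gx (Q i) (Q j)) + V i * (\<Sum>j<N. V j * Gx (Q i) (Q j))) (at (Q i))"
proof -
  define w where "w k l = P k * P l + V k * V l" for k l
  have "((\<lambda>s. G ((Q(i := s)) k) ((Q(i := s)) l)) has_real_derivative
      (if k = i then Gx (Q i) (Q l) else 0) + (if l = i then Gx (Q i) (Q k) else 0)) (at (Q i))"
    if "k < N" "l < N" for k l
    using that distinct G_has_derivative[of "Q i" "Q l"] G_has_derivative[of "Q i" "Q k"]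
    by (cases "k = i"; cases "l = i") (auto simp: G_sym[of "Q k"])
  then have "((\<lambda>s. Ham N (Q(i := s)) P V) has_real_derivative
      1/2 * (\<Sum>k<N. \<Sum>l<N. w k l * ((if k = i then Gx (Q i) (Q l) else 0) + (if l = i then Gx (Q i) (Q k) else 0))))
      (at (Q i))"
    unfolding Ham_def w_def by (intro DERIV_cmult DERIV_sum DERIV_cmult) auto
  moreover have "1/2 * (\<Sum>k<N. \<Sum>l<N. w k l * ((if k = i then Gx (Q i) (Q l) else 0) + (if l = i then Gx (Q i) (Q k) else 0)))
      = P i * (\<Sum>j<N. P j * Gx (Q i) (Q j)) + V i * (\<Sum>j<N. V j * Gx (Q i) (Q j))"
    unfolding sum_sum_delta[OF i] w_def
    by (simp add: algebra_simps sum.distrib sum_distrib_left)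
  ultimately show ?thesis
    by (rule DERIV_cong)
qed

locale particle_paths =
  fixes N :: nat and T :: "real set" and q p v :: "nat \<Rightarrow> real \<Rightarrow> real"
  assumes open_T: "open T"
    and C1: "\<forall>i<N. q i C1_differentiable_on T \<and> p i C1_differentiable_on T \<and> v i C1_differentiable_on T"
    and distinct: "\<forall>t\<in>T. \<forall>i<N. \<forall>j<N. i \<noteq> j \<longrightarrow> q i t \<noteq> q j t"
begin

lemma continuous_on_paths:
  assumes "j < N"
  shows "continuous_on T (q j)" "continuous_on T (p j)" "continuous_on T (v j)"
    and "continuous_on T (deriv (q j))" "continuous_on T (deriv (p j))" "continuous_on T (deriv (v j))"
  using assms C1 C1_differentiable_on_openD(2,3)[OF _ open_T] by blast+

lemma continuous_on_vel_at_path: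
  assumes w: "\<forall>k<N. continuous_on T (w k)" and j: "j < N"
  shows "continuous_on T (\<lambda>t. vel N q w (q j t) t)" "continuous_on T (\<lambda>t. dvel N q w (q j t) t)"
proof -
  show "continuous_on T (\<lambda>t. vel N q w (q j t) t)"
    unfolding vel_def G_def using w j continuous_on_paths
    by (auto intro!: continuous_intros)
  show "continuous_on T (\<lambda>t. dvel N q w (q j t) t)"
    unfolding dvel_def Gx_def
  proof (intro continuous_on_sum continuous_on_mult continuous_on_minus)
    fix k assume k: "k \<in> {..<N}"
    then show "continuous_on T (w k)" "continuous_on T (\<lambda>t. G (q j t) (q k t))"
      unfolding G_def using w j continuous_on_paths by (auto intro!: continuous_intros)
    show "continuous_on T (\<lambda>t. sgn (q j t - q k t))"
    proof (cases "k = j")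
      case False
      then show ?thesis
        using k j distinct continuous_on_paths by (auto intro!: continuous_intros)
    qed simp
  qed
qed

lemma weak_EP_x_iff_pointwise:
  "weak_EP_x N q p v T \<longleftrightarrow> (\<forall>i<N. \<forall>t\<in>T.
     - deriv (p i) t = p i t * dvel N q p (q i t) t + v i t * dvel N q v (q i t) t \<and>
     p i t * (deriv (q i) t - vel N q p (q i t) t) = 0)"
proof -
  have "weak_EP_x N q p v T \<longleftrightarrow> (\<forall>i<N. \<forall>t\<in>T.
      - deriv (p i) t - (p i t * dvel N q p (q i t) t + v i t * dvel N q v (q i t) t) = 0 \<and>
      - (p i t * (deriv (q i) t - vel N q p (q i t) t)) = 0)"
    unfolding weak_EP_x_def
  proof (rule weak_form_iff_coeffs_zero[OF open_T _ _ distinct])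
    show "\<forall>j<N. q j C1_differentiable_on T \<and> p j C1_differentiable_on T"
      using C1 by blast
    show "\<forall>j<N. continuous_on T (\<lambda>t. - deriv (p j) t - (p j t * dvel N q p (q j t) t + v j t * dvel N q v (q j t) t))
        \<and> continuous_on T (\<lambda>t. - (p j t * (deriv (q j) t - vel N q p (q j t) t)))"
      using continuous_on_paths continuous_on_vel_at_path by (auto intro!: continuous_intros)
  qed (simp add: sum.distrib[symmetric] algebra_simps)
  then show ?thesis
    by simp
qed

lemma weak_EP_y_iff:
  "weak_EP_y N q p v T \<longleftrightarrow> (\<forall>i<N. \<forall>t\<in>T.
     v i t * (deriv (q i) t - vel N q p (q i t) t) = 0 \<and> deriv (v i) t = 0)"
proof -
  have "weak_EP_y N q p v T \<longleftrightarrow> (\<forall>i<N. \<forall>t\<in>T.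
      - deriv (v i) t = 0 \<and> - (v i t * (deriv (q i) t - vel N q p (q i t) t)) = 0)"
    unfolding weak_EP_y_def
  proof (rule weak_form_iff_coeffs_zero[OF open_T _ _ distinct])
    show "\<forall>j<N. q j C1_differentiable_on T \<and> v j C1_differentiable_on T"
      using C1 by blast
    show "\<forall>j<N. continuous_on T (\<lambda>t. - deriv (v j) t)
        \<and> continuous_on T (\<lambda>t. - (v j t * (deriv (q j) t - vel N q p (q j t) t)))"
      using continuous_on_paths continuous_on_vel_at_path by (auto intro!: continuous_intros)
  qed (simp add: sum.distrib[symmetric] algebra_simps)
  then show ?thesis
    by auto
qed

lemma Ham_position_derivative_iff:
  assumes "i < N" "t \<in> T"
  shows "((\<lambda>s. Ham N ((\<lambda>j. q j t)(i := s)) (\<lambda>j. p j t) (\<lambda>j. v j t)) has_real_derivative D) (at (q i t))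
     \<longleftrightarrow> D = p i t * dvel N q p (q i t) t + v i t * dvel N q v (q i t) t"
  using Ham_has_derivative_position[of i N "\<lambda>j. q j t" "\<lambda>j. p j t" "\<lambda>j. v j t"] assms distinct
  by (auto simp: dvel_def intro: DERIV_unique)

lemma Ham_momentum_derivative:
  assumes "i < N"
  shows "((\<lambda>s. Ham N (\<lambda>j. q j t) ((\<lambda>j. p j t)(i := s)) (\<lambda>j. v j t))
    has_real_derivative vel N q p (q i t) t) (at (p i t))"
  using Ham_has_derivative_momentum[where Q="\<lambda>j. q j t" and P="\<lambda>j. p j t" and V="\<lambda>j. v j t", OF assms]
  by (simp add: vel_def)

lemma Ham_parameter_derivative:
  assumes "i < N"
  shows "((\<lambda>s. Ham N (\<lambda>j. q j t) (\<lambda>j. p j t) ((\<lambda>j. v j t)(i := s)))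
    has_real_derivative vel N q v (q i t) t) (at (v i t))"
  using Ham_has_derivative_momentum[where Q="\<lambda>j. q j t" and P="\<lambda>j. v j t" and V="\<lambda>j. p j t", OF assms]
  by (simp add: vel_def Ham_swap[of N _ "\<lambda>j. p j t"])

lemma weak_EP_x_iff:
  "weak_EP_x N q p v T \<longleftrightarrow> (\<forall>i<N. \<forall>t\<in>T.
     p i t * (deriv (q i) t - vel N q p (q i t) t) = 0 \<and>
     ((\<lambda>s. Ham N ((\<lambda>j. q j t)(i := s)) (\<lambda>j. p j t) (\<lambda>j. v j t))
        has_real_derivative (- deriv (p i) t)) (at (q i t)))"
  unfolding weak_EP_x_iff_pointwise by (auto simp: Ham_position_derivative_iff)

lemma weak_EP_iff_Hamilton_equations:
  assumes nonzero: "\<forall>i<N. \<forall>t\<in>T. p i t \<noteq> 0 \<or> v i t \<noteq> 0"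
  shows "weak_EP_x N q p v T \<and> weak_EP_y N q p v T \<longleftrightarrow> (\<forall>i<N. \<forall>t\<in>T.
     deriv (q i) t = vel N q p (q i t) t \<and>
     ((\<lambda>s. Ham N (\<lambda>j. q j t) ((\<lambda>j. p j t)(i := s)) (\<lambda>j. v j t))
        has_real_derivative deriv (q i) t) (at (p i t)) \<and>
     ((\<lambda>s. Ham N ((\<lambda>j. q j t)(i := s)) (\<lambda>j. p j t) (\<lambda>j. v j t))
        has_real_derivative (- deriv (p i) t)) (at (q i t)) \<and>
     deriv (v i) t = 0)"
proof -
  have "p i t * (deriv (q i) t - vel N q p (q i t) t) = 0 \<and> v i t * (deriv (q i) t - vel N q p (q i t) t) = 0
      \<longleftrightarrow> deriv (q i) t = vel N q p (q i t) t" if "i < N" "t \<in> T" for i t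
    using nonzero that by auto
  then show ?thesis
    unfolding weak_EP_x_iff weak_EP_y_iff using Ham_momentum_derivative by (metis (no_types, lifting))
qed

end

theorem mainTheorem7:
  fixes N :: nat and T :: "real set" and q p v :: "nat \<Rightarrow> real \<Rightarrow> real"
  assumes "open T"
    and "\<forall>i<N. q i C1_differentiable_on T \<and> p i C1_differentiable_on T \<and> v i C1_differentiable_on T"
    and "\<forall>t\<in>T. \<forall>i<N. \<forall>j<N. i \<noteq> j \<longrightarrow> q i t \<noteq> q j t"
  shows
    "(weak_EP_x N q p v T \<longleftrightarrow>
        (\<forall>i<N. \<forall>t\<in>T.
           p i t * (deriv (q i) t - (\<Sum>j<N. p j t * G (q i t) (q j t))) = 0 \<and>
           ((\<lambda>s. Ham N ((\<lambda>j. q j t)(i := s)) (\<lambda>j. p j t) (\<lambda>j. v j t))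
              has_real_derivative (- deriv (p i) t)) (at (q i t))))
     \<and> (weak_EP_y N q p v T \<longleftrightarrow>
        (\<forall>i<N. \<forall>t\<in>T.
           v i t * (deriv (q i) t - (\<Sum>j<N. p j t * G (q i t) (q j t))) = 0 \<and>
           deriv (v i) t = 0))
     \<and> ((\<forall>i<N. \<forall>t\<in>T. p i t \<noteq> 0 \<or> v i t \<noteq> 0) \<longrightarrow>
        (weak_EP_x N q p v T \<and> weak_EP_y N q p v T \<longleftrightarrow>
          (\<forall>i<N. \<forall>t\<in>T.
             deriv (q i) t = (\<Sum>j<N. p j t * G (q i t) (q j t)) \<and>
             ((\<lambda>s. Ham N (\<lambda>j. q j t) ((\<lambda>j. p j t)(i := s)) (\<lambda>j. v j t))
                has_real_derivative deriv (q i) t) (at (p i t)) \<and>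
             ((\<lambda>s. Ham N ((\<lambda>j. q j t)(i := s)) (\<lambda>j. p j t) (\<lambda>j. v j t))
                has_real_derivative (- deriv (p i) t)) (at (q i t)) \<and>
             deriv (v i) t = 0)))
     \<and> (\<forall>i<N. \<forall>t\<in>T.
          ((\<lambda>s. Ham N (\<lambda>j. q j t) (\<lambda>j. p j t) ((\<lambda>j. v j t)(i := s)))
             has_real_derivative (\<Sum>j<N. v j t * G (q i t) (q j t))) (at (v i t)) \<and>
          (\<Sum>j<N. v j t * G (q i t) (q j t)) = vel N q v (q i t) t)"
proof -
  interpret particle_paths N T q p v
    using assms by unfold_locales
  show ?thesis
    using weak_EP_x_iff weak_EP_y_iff weak_EP_iff_Hamilton_equations Ham_parameter_derivative
    unfolding vel_def by blast
qed

end
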